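(* Let $\mathcal{B}$ be a $\sigma$-algebra on a nonempty set $E$, and let $\nu$ be a maxitive measure on $\mathcal{B}$ having a $\mathcal{B}$-measurable cardinal density $c:E\to[0,\infty]$, i.e. $\nu(B)=\sup_{x\in B}c(x)$ for all $B\in\mathcal{B}$. Then for every maxitive measure $\tau$ on $\mathcal{B}$, $\nu\ll\tau$ if and only if $\nu\lll\tau$. In particular $\nu$ is autocontinuous, i.e. $\nu\lll\nu$.
   Context: A maxitive measure on $\mathcal{B}$ is a map $\nu:\mathcal{B}\to[0,\infty]$ with $\nu(\emptyset)=0$ and $\nu(B\cup B')=\max(\nu(B),\nu(B'))$ for all $B,B'\in\mathcal{B}$. A map $f:E\to[0,\infty]$ is $\mathcal{B}$-measurable if $\{f>t\}\in\mathcal{B}$ for all $t\geq 0$. For a maxitive measure $\tau$, a subset $N\subset E$ is $\tau$-negligible if $N\subset G$ for some $G\in\mathcal{B}$ with $\tau(G)=0$. The $\tau$-essential supremum of $f$ on $B$ is $\bigoplus^{\tau}_{x\in B}f(x)=\inf\{t>0: B\cap\{f>t\}\text{ is }\tau\text{-negligible}\}$ (with $\inf\emptyset=\infty$). We write $\nu\ll\tau$ if $\tau(B)=0$ implies $\nu(B)=0$ for all $B\in\mathcal{B}$, and $\nu\lll\tau$ if there exists a $\mathcal{B}$-measurable $f:E\to[0,\infty]$ (a relative density) with $\nu(B)=\bigoplus^{\tau}_{x\in B}f(x)$ for all $B\in\mathcal{B}$. *)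

theory Defs
  imports "HOL-Analysis.Analysis"
begin

definition maxitive :: "'a set set \<Rightarrow> ('a set \<Rightarrow> ennreal) \<Rightarrow> bool" where
  "maxitive \<B> \<nu> \<longleftrightarrow> \<nu> {} = 0 \<and>
     (\<forall>B\<in>\<B>. \<forall>B'\<in>\<B>. \<nu> (B \<union> B') = max (\<nu> B) (\<nu> B'))"

definition B_measurable :: "'a set \<Rightarrow> 'a set set \<Rightarrow> ('a \<Rightarrow> ennreal) \<Rightarrow> bool" where
  "B_measurable E \<B> f \<longleftrightarrow> (\<forall>t. {x\<in>E. f x > t} \<in> \<B>)"

definition negligible_wrt :: "'a set set \<Rightarrow> ('a set \<Rightarrow> ennreal) \<Rightarrow> 'a set \<Rightarrow> bool" where
  "negligible_wrt \<B> \<tau> N \<longleftrightarrow> (\<exists>G\<in>\<B>. N \<subseteq> G \<and> \<tau> G = 0)"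

definition ess_sup_wrt :: "'a set set \<Rightarrow> ('a set \<Rightarrow> ennreal) \<Rightarrow> 'a set \<Rightarrow> ('a \<Rightarrow> ennreal) \<Rightarrow> ennreal" where
  "ess_sup_wrt \<B> \<tau> B f = Inf {t. t > 0 \<and> negligible_wrt \<B> \<tau> (B \<inter> {x. f x > t})}"

definition abs_cont :: "'a set set \<Rightarrow> ('a set \<Rightarrow> ennreal) \<Rightarrow> ('a set \<Rightarrow> ennreal) \<Rightarrow> bool" where
  "abs_cont \<B> \<nu> \<tau> \<longleftrightarrow> (\<forall>B\<in>\<B>. \<tau> B = 0 \<longrightarrow> \<nu> B = 0)"

definition has_rel_density :: "'a set \<Rightarrow> 'a set set \<Rightarrow> ('a set \<Rightarrow> ennreal) \<Rightarrow> ('a set \<Rightarrow> ennreal) \<Rightarrow> bool" where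
  "has_rel_density E \<B> \<nu> \<tau> \<longleftrightarrow>
     (\<exists>f. B_measurable E \<B> f \<and> (\<forall>B\<in>\<B>. \<nu> B = ess_sup_wrt \<B> \<tau> B f))"

end

theory Submission
  imports Defs
begin

text \<open>If \<nu> \<lll> \<tau> with density f, a \<tau>-null set is \<tau>-negligible at every level t > 0, so its
  essential supremum is Inf {t. t > 0} = 0; hence \<nu> \<ll> \<tau>. Conversely, for a cardinal density c
  and \<nu> \<ll> \<tau>, c vanishes pointwise on every \<tau>-null set, so deleting \<tau>-negligible sets cannot
  lower the supremum of c: the essential supremum of c equals its plain supremum, i.e. c itself
  is a relative density of \<nu> with respect to \<tau>.\<close>

lemma ess_sup_wrt_null_set:
  assumes "B \<in> \<B>" and "\<tau> B = 0"
  shows "ess_sup_wrt \<B> \<tau> B f = 0"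
proof -
  have "{t. t > 0 \<and> negligible_wrt \<B> \<tau> (B \<inter> {x. f x > t})} = {t. t > 0}"
    using assms unfolding negligible_wrt_def by blast
  moreover have "Inf {t::ennreal. t > 0} \<le> 0"
    unfolding Inf_le_iff by (metis dense mem_Collect_eq)
  ultimately show ?thesis
    unfolding ess_sup_wrt_def by simp
qed

lemma abs_cont_if_has_rel_density:
  assumes "has_rel_density E \<B> \<nu> \<tau>"
  shows "abs_cont \<B> \<nu> \<tau>"
  using assms ess_sup_wrt_null_set
  unfolding abs_cont_def has_rel_density_def by metis

lemma ess_sup_wrt_le_SUP:
  assumes "{} \<in> \<B>" and "\<tau> {} = 0"
  shows "ess_sup_wrt \<B> \<tau> B f \<le> (SUP x\<in>B. f x)"
  unfolding ess_sup_wrt_def Inf_le_iff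
proof (intro allI impI)
  fix y assume "(SUP x\<in>B. f x) < y"
  then obtain t where t: "(SUP x\<in>B. f x) < t" "t < y"
    using dense by blast
  then have "f x \<le> t" if "x \<in> B" for x
    using SUP_upper[OF that, of f] by simp
  then have "B \<inter> {x. f x > t} = {}"
    by (auto simp: not_less[symmetric])
  then have "negligible_wrt \<B> \<tau> (B \<inter> {x. f x > t})"
    unfolding negligible_wrt_def using assms by auto
  moreover have "t > 0"
    using le_less_trans[OF zero_le t(1)] .
  ultimately show "\<exists>t\<in>{t. t > 0 \<and> negligible_wrt \<B> \<tau> (B \<inter> {x. f x > t})}. t < y"
    using t(2) by blast
qed

lemma SUP_le_ess_sup_wrt:
  assumes vanish: "\<And>G x. G \<in> \<B> \<Longrightarrow> \<tau> G = 0 \<Longrightarrow> x \<in> G \<Longrightarrow> f x = 0"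
  shows "(SUP x\<in>B. f x) \<le> ess_sup_wrt \<B> \<tau> B f"
  unfolding ess_sup_wrt_def le_Inf_iff
proof
  fix t assume "t \<in> {t. t > 0 \<and> negligible_wrt \<B> \<tau> (B \<inter> {x. f x > t})}"
  then obtain G where G: "G \<in> \<B>" "\<tau> G = 0" "B \<inter> {x. f x > t} \<subseteq> G" and "t > 0"
    unfolding negligible_wrt_def by blast
  have "f x \<le> t" if "x \<in> B" for x
  proof (rule ccontr)
    assume "\<not> f x \<le> t"
    then have "x \<in> G" "f x > t"
      using G(3) that by auto
    with vanish[OF G(1,2)] \<open>t > 0\<close> show False
      by simp
  qed
  then show "(SUP x\<in>B. f x) \<le> t"
    by (simp add: SUP_least)
qed

lemma has_rel_density_if_abs_cont:
  assumes "{} \<in> \<B>" and "\<tau> {} = 0"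
    and "B_measurable E \<B> c"
    and card_density: "\<forall>B\<in>\<B>. \<nu> B = (SUP x\<in>B. c x)"
    and "abs_cont \<B> \<nu> \<tau>"
  shows "has_rel_density E \<B> \<nu> \<tau>"
  unfolding has_rel_density_def
proof (intro exI conjI ballI)
  show "B_measurable E \<B> c" by fact
  have "c x = 0" if "G \<in> \<B>" "\<tau> G = 0" "x \<in> G" for G x
    using that card_density \<open>abs_cont \<B> \<nu> \<tau>\<close> unfolding abs_cont_def
    by (metis SUP_upper le_zero_eq)
  then show "\<nu> B = ess_sup_wrt \<B> \<tau> B c" if "B \<in> \<B>" for B
    using that card_density ess_sup_wrt_le_SUP[of \<B> \<tau> B c, OF assms(1,2)]
      SUP_le_ess_sup_wrt[of \<B> \<tau> c B]
    by (metis antisym)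
qed

theorem proposition3p2:
  fixes E :: "'a set" and \<B> :: "'a set set" and \<nu> :: "'a set \<Rightarrow> ennreal" and c :: "'a \<Rightarrow> ennreal"
  assumes "sigma_algebra E \<B>"
    and "E \<noteq> {}"
    and "maxitive \<B> \<nu>"
    and "B_measurable E \<B> c"
    and "\<forall>B\<in>\<B>. \<nu> B = (SUP x\<in>B. c x)"
  shows "(\<forall>\<tau>. maxitive \<B> \<tau> \<longrightarrow> (abs_cont \<B> \<nu> \<tau> \<longleftrightarrow> has_rel_density E \<B> \<nu> \<tau>))
         \<and> has_rel_density E \<B> \<nu> \<nu>"
proof -
  have empty: "{} \<in> \<B>"
    using assms(1) by (auto simp: sigma_algebra_iff2)
  have "abs_cont \<B> \<nu> \<tau> \<longleftrightarrow> has_rel_density E \<B> \<nu> \<tau>" if "maxitive \<B> \<tau>" for \<tau>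
    using that has_rel_density_if_abs_cont[OF empty _ assms(4,5)] abs_cont_if_has_rel_density
    unfolding maxitive_def by blast
  moreover have "abs_cont \<B> \<nu> \<nu>"
    unfolding abs_cont_def by simp
  ultimately show ?thesis
    using assms(3) by (auto simp: maxitive_def)
qed

end
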